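(* For integers $i\ge0$, $s\ge1$ and $n>s$, let $b_{i,s}(n)$ be the coefficient of $t^i$ in the power series expansion of $\frac{f_n(t)}{f_s(t)f_{n-s}(t)}$. Then for fixed $i\ge 0$ and $s\ge 1$, the function $n\mapsto b_{i,s}(n)$ is constant for $n\ge\max(i,1)+s$.
   Context: $f_n(t):=(1-t^2)(1-t^3)\cdots(1-t^n)$ for $n\ge1$ (so $f_1=1$). *)

theory Defs
  imports "HOL-Computational_Algebra.Formal_Power_Series"
begin

definition f_ps :: "nat \<Rightarrow> rat fps" where
  "f_ps n = (\<Prod>k\<in>{2..n}. 1 - fps_X ^ k)"

definition b_coeff :: "nat \<Rightarrow> nat \<Rightarrow> nat \<Rightarrow> rat" where
  "b_coeff i s n = fps_nth (f_ps n / (f_ps s * f_ps (n - s))) i"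

end

theory Submission
  imports Defs
begin

text \<open>
  Write g_n = f_n / (f_s f_(n-s)). Since f_(n+1) = f_n (1 - t^(n+1)) and
  f_(n+1-s) = f_(n-s) (1 - t^(n+1-s)), we get g_(n+1) (1 - t^(n+1-s)) = g_n (1 - t^(n+1)).
  Multiplying by 1 - t^k does not change the coefficients below t^k, so g_(n+1) and g_n
  agree up to t^(n-s).
\<close>

lemma fps_nth_mult_one_minus_X_power:
  fixes h :: "'a::comm_ring_1 fps"
  assumes "j < k"
  shows "fps_nth (h * (1 - fps_X ^ k)) j = fps_nth h j"
  using assms by (simp add: algebra_simps fps_X_power_mult_right_nth)

lemma fps_divide_mult_cancel:
  fixes a b u v :: "'a::field fps"
  assumes "fps_nth b 0 \<noteq> 0" "fps_nth v 0 \<noteq> 0"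
  shows "a * u / (b * v) * v = a / b * u"
proof -
  have "inverse v * v = 1"
    using assms(2) by (rule inverse_mult_eq_1)
  then show ?thesis
    using assms by (simp add: fps_divide_unit fps_inverse_mult algebra_simps)
qed

lemma f_ps_nth_0 [simp]: "fps_nth (f_ps n) 0 = 1"
  unfolding f_ps_def by (induction n) (auto simp: atLeastAtMostSuc_conv)

lemma f_ps_Suc: "1 \<le> n \<Longrightarrow> f_ps (Suc n) = f_ps n * (1 - fps_X ^ Suc n)"
  unfolding f_ps_def by (simp add: atLeastAtMostSuc_conv mult.commute)

lemma f_ps_quotient_Suc:
  assumes "1 \<le> s" "s < n"
  shows "f_ps (Suc n) / (f_ps s * f_ps (Suc n - s)) * (1 - fps_X ^ Suc (n - s))
         = f_ps n / (f_ps s * f_ps (n - s)) * (1 - fps_X ^ Suc n)"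
proof -
  have "f_ps (Suc n - s) = f_ps (n - s) * (1 - fps_X ^ Suc (n - s))"
    using assms by (simp add: Suc_diff_le f_ps_Suc)
  moreover have "f_ps (Suc n) = f_ps n * (1 - fps_X ^ Suc n)"
    using assms by (simp add: f_ps_Suc)
  ultimately show ?thesis
    using fps_divide_mult_cancel[of "f_ps s * f_ps (n - s)" "1 - fps_X ^ Suc (n - s)"
        "f_ps n" "1 - fps_X ^ Suc n"]
    by (simp add: mult.assoc)
qed

lemma b_coeff_Suc:
  assumes "1 \<le> s" "s < n" "i + s \<le> n"
  shows "b_coeff i s (Suc n) = b_coeff i s n"
proof -
  have "b_coeff i s (Suc n)
        = fps_nth (f_ps (Suc n) / (f_ps s * f_ps (Suc n - s)) * (1 - fps_X ^ Suc (n - s))) i"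
    using assms by (simp add: b_coeff_def fps_nth_mult_one_minus_X_power del: power_Suc)
  also have "\<dots> = fps_nth (f_ps n / (f_ps s * f_ps (n - s)) * (1 - fps_X ^ Suc n)) i"
    using assms by (simp only: f_ps_quotient_Suc)
  also have "\<dots> = b_coeff i s n"
    using assms by (simp add: b_coeff_def fps_nth_mult_one_minus_X_power del: power_Suc)
  finally show ?thesis .
qed

theorem lemma5p1:
  fixes i s :: nat
  assumes "s \<ge> 1"
  shows "\<forall>n m. n \<ge> max i 1 + s \<and> m \<ge> max i 1 + s \<longrightarrow> b_coeff i s n = b_coeff i s m"
proof -
  let ?N = "max i 1 + s"
  have "b_coeff i s n = b_coeff i s ?N" if "n \<ge> ?N" for n
    using that
  proof (induction n rule: dec_induct)
    case (step n)
    then show ?case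
      using b_coeff_Suc[of s n i] assms by simp
  qed simp
  then show ?thesis
    by metis
qed

end
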